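(* Let $x$ and $y$ be finite sequences of strings and $\lambda\ge0$. The tree $T^\ast$ built by $\textsc{BuildBifurcation}(x,y,\lambda)$ satisfies $\mathrm{error}_\lambda(T^\ast)\le\mathsf{EDG}(x,y,\lambda)$.
   Context: Strings are over a finite alphabet; $\varepsilon$ is the empty string and $\mathsf{ED}$ is Levenshtein edit distance (unit costs). $\mathsf{AED}(x,y)$ for string sequences is the minimum cost of transforming $x$ into $y$ using only inserting a string $w$ into $x$ (cost $\mathsf{ED}(w,\varepsilon)$) and substituting a string $w$ of $x$ by $w'$ (cost $\mathsf{ED}(w,w')$), with no deletions (defined only if $|x|\le|y|$). A labeled summary tree of $\{x,y\}$ is a rooted tree with a sentinel root, other nodes labeled by strings, with $x$ and $y$ assigned to nodes $v_x,v_y$; $L_T(v)$ is the label sequence on the root-to-$v$ path excluding the sentinel; $|T|$ counts non-sentinel nodes; $\mathrm{error}_\lambda(T)=\mathsf{AED}(x,L_T(v_x))+\mathsf{AED}(y,L_T(v_y))+\lambda|T|$. $\mathsf{EDG}(i,j,\lambda)$ ($1\le i\le|x|+1$, $1\le j\le|y|+1$): $\mathsf{EDG}(|x|+1,|y|+1,\lambda)=0$, $\mathsf{EDG}(i,|y|+1,\lambda)=\lambda(|x|-i+1)$, $\mathsf{EDG}(|x|+1,j,\lambda)=\lambda(|y|-j+1)$, and otherwise the minimum of $\mathsf{EDG}(i+1,j+1,\lambda)+\lambda+\mathsf{ED}(x_i,y_j)$, $\mathsf{EDG}(i,j+1,\lambda)+\lambda+\mathsf{ED}(\varepsilon,y_j)$,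 $\mathsf{EDG}(i+1,j,\lambda)+\lambda+\mathsf{ED}(x_i,\varepsilon)$, and $\lambda(|x|-i+1)+\lambda(|y|-j+1)$ (give up); $\mathsf{EDG}(x,y,\lambda)=\mathsf{EDG}(1,1,\lambda)$. $\textsc{BuildBifurcation}(x,y,\lambda)$ builds a tree recursively following an optimal choice in this recurrence: both empty gives the empty tree; insertion of $y_1$ (or $x$ empty) gives a node labeled $y_1$ above $\textsc{BuildBifurcation}(x,y_{2..|y|},\lambda)$; deletion of $x_1$ (or $y$ empty) gives a node labeled $x_1$ above $\textsc{BuildBifurcation}(x_{2..|x|},y,\lambda)$; substitution gives a node labeled $x_1$ above $\textsc{BuildBifurcation}(x_{2..|x|},y_{2..|y|},\lambda)$; give up places two disjoint paths labeled successively by the remaining strings of $x$ and of $y$. The sequence $x$ (resp. $y$) is mapped to the node created for its last string. *)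

theory Defs
  imports Main "HOL.Real"
begin

fun ED :: "'a list \<Rightarrow> 'a list \<Rightarrow> nat" where
  "ED [] ys = length ys"
| "ED (a # xs) [] = length (a # xs)"
| "ED (a # xs) (b # ys) =
     min (min (ED xs ys + (if a = b then 0 else 1)) (ED xs (b # ys) + 1)) (ED (a # xs) ys + 1)"

inductive aed_reach :: "'a list list \<Rightarrow> 'a list list \<Rightarrow> nat \<Rightarrow> bool" where
  refl: "aed_reach x x 0"
| ins: "aed_reach x z c \<Longrightarrow> i \<le> length z \<Longrightarrow>
          aed_reach x (take i z @ w # drop i z) (c + ED w [])"
| subst: "aed_reach x z c \<Longrightarrow> i < length z \<Longrightarrow>
          aed_reach x (z[i := w]) (c + ED (z ! i) w)"

text \<open>AED is defined (only) when length x \<le> length y; then the set below is nonempty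
  and Inf is its least element.\<close>

definition AED :: "'a list list \<Rightarrow> 'a list list \<Rightarrow> nat" where
  "AED x y = Inf {c. aed_reach x y c}"

text \<open>A labeled summary tree is represented by the forest of subtrees of the sentinel
  root. Nodes are addressed by paths of child indices; the empty path is the sentinel.\<close>

datatype 'a ltree = LNode (label: "'a list") (children: "'a ltree list")

fun tsize :: "'a ltree \<Rightarrow> nat" where
  "tsize (LNode l cs) = Suc (sum_list (map tsize cs))"

definition fsize :: "'a ltree list \<Rightarrow> nat" where
  "fsize F = sum_list (map tsize F)"

fun path_labels :: "'a ltree list \<Rightarrow> nat list \<Rightarrow> 'a list list" where
  "path_labels F [] = []"
| "path_labels F (i # p) = label (F ! i) # path_labels (children (F ! i)) p"

definition error :: "real \<Rightarrow> 'a list list \<Rightarrow> 'a list list \<Rightarrow> 'a ltree list \<Rightarrow> nat list \<Rightarrow> nat list \<Rightarrow> real" where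
  "error lam x y F vx vy =
     real (AED x (path_labels F vx)) + real (AED y (path_labels F vy)) + lam * real (fsize F)"

fun EDG :: "'a list list \<Rightarrow> 'a list list \<Rightarrow> real \<Rightarrow> real" where
  "EDG [] [] lam = 0"
| "EDG (a # xs) [] lam = lam * real (length (a # xs))"
| "EDG [] (b # ys) lam = lam * real (length (b # ys))"
| "EDG (a # xs) (b # ys) lam =
     min (min (EDG xs ys lam + lam + real (ED a b))
              (EDG (a # xs) ys lam + lam + real (ED [] b)))
         (min (EDG xs (b # ys) lam + lam + real (ED a []))
              (lam * real (length (a # xs)) + lam * real (length (b # ys))))"

fun chain :: "'a list list \<Rightarrow> 'a ltree list" where
  "chain [] = []"
| "chain (s # ss) = [LNode s (chain ss)]"

text \<open>build_bif x y lam (F, vx, vy): (F, vx, vy) is a tree (forest below the sentinel)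
  with the nodes vx, vy, obtainable by BuildBifurcation following some optimal choice.\<close>

inductive build_bif :: "'a list list \<Rightarrow> 'a list list \<Rightarrow> real \<Rightarrow> 'a ltree list \<times> nat list \<times> nat list \<Rightarrow> bool" where
  empty: "build_bif [] [] lam ([], [], [])"
| insert: "build_bif x ys lam (F, px, py) \<Longrightarrow>
      x = [] \<or> EDG x (b # ys) lam = EDG x ys lam + lam + real (ED [] b) \<Longrightarrow>
      build_bif x (b # ys) lam ([LNode b F], if x = [] then [] else 0 # px, 0 # py)"
| delete: "build_bif xs y lam (F, px, py) \<Longrightarrow>
      y = [] \<or> EDG (a # xs) y lam = EDG xs y lam + lam + real (ED a []) \<Longrightarrow>
      build_bif (a # xs) y lam ([LNode a F], 0 # px, if y = [] then [] else 0 # py)"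
| substitute: "build_bif xs ys lam (F, px, py) \<Longrightarrow>
      EDG (a # xs) (b # ys) lam = EDG xs ys lam + lam + real (ED a b) \<Longrightarrow>
      build_bif (a # xs) (b # ys) lam ([LNode a F], 0 # px, 0 # py)"
| giveup: "EDG (a # xs) (b # ys) lam =
        lam * real (length (a # xs)) + lam * real (length (b # ys)) \<Longrightarrow>
      build_bif (a # xs) (b # ys) lam
        ([hd (chain (a # xs)), hd (chain (b # ys))],
         replicate (length (a # xs)) 0, 1 # replicate (length ys) 0)"

end

theory Submission
  imports Defs
begin

text \<open>Every choice that places a node
  pays \<open>\<lambda>\<close> for it and extends the edit scripts of the remaining suffixes by one insertion or
  substitution whose cost is exactly the edit-distance term of the recurrence; giving up
  copies the remaining strings verbatim at cost \<open>\<lambda>(|x| + |y|)\<close>. Since AED is the least cost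
  of an edit script, the error of the tree is at most the recurrence value.\<close>

lemma ED_Nil_right [simp]: "ED xs [] = length xs"
  by (cases xs) auto

lemma ED_sym: "ED xs ys = ED ys xs"
  by (induction xs ys rule: ED.induct) (auto simp: min.commute min.left_commute)

lemma EDG_Nil_left: "EDG [] ys lam = lam * real (length ys)"
  by (cases ys) auto

lemma EDG_Nil_right: "EDG xs [] lam = lam * real (length xs)"
  by (cases xs) auto

lemma aed_reach_length_le: "aed_reach x z c \<Longrightarrow> length x \<le> length z"
  by (induction rule: aed_reach.induct) auto

lemma AED_le: "aed_reach x z c \<Longrightarrow> AED x z \<le> c"
  unfolding AED_def Inf_nat_def by (rule Least_le) simp

lemma aed_reach_Cons: "aed_reach x z c \<Longrightarrow> aed_reach (a # x) (a # z) c"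
proof (induction rule: aed_reach.induct)
  case (refl x)
  show ?case by (rule aed_reach.refl)
next
  case (ins x z c i w)
  have "aed_reach (a # x) (take (Suc i) (a # z) @ w # drop (Suc i) (a # z)) (c + ED w [])"
    by (rule aed_reach.ins) (use ins in auto)
  then show ?case by simp
next
  case (subst x z c i w)
  have "aed_reach (a # x) ((a # z)[Suc i := w]) (c + ED ((a # z) ! Suc i) w)"
    by (rule aed_reach.subst) (use subst in auto)
  then show ?case by simp
qed

lemma aed_reach_insert_Cons: "aed_reach x z c \<Longrightarrow> aed_reach x (w # z) (c + length w)"
  using aed_reach.ins[of x z c 0 w] by simp

lemma aed_reach_subst_Cons: "aed_reach x z c \<Longrightarrow> aed_reach (a # x) (w # z) (c + ED a w)"
  using aed_reach.subst[OF aed_reach_Cons, of x z c 0 a w] by simp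

lemma fsize_Nil [simp]: "fsize [] = 0"
  by (simp add: fsize_def)

lemma fsize_Cons_LNode [simp]: "fsize (LNode l cs # F) = Suc (fsize cs + fsize F)"
  by (simp add: fsize_def)

lemma fsize_chain: "fsize (chain s) = length s"
  by (induction s) auto

lemma path_labels_chain: "path_labels (chain s) (replicate (length s) 0) = s"
  by (induction s) auto

text \<open>AED is an infimum, so the induction carries explicit edit scripts together with a bound
  on their total cost plus \<open>\<lambda>|T|\<close>.\<close>

definition scripts_within ::
    "real \<Rightarrow> 'a list list \<Rightarrow> 'a list list \<Rightarrow> 'a ltree list \<Rightarrow> nat list \<Rightarrow> nat list \<Rightarrow> real \<Rightarrow> bool"
  where "scripts_within lam x y F vx vy e \<longleftrightarrow>
    (\<exists>cx cy. aed_reach x (path_labels F vx) cx \<and> aed_reach y (path_labels F vy) cy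
       \<and> real cx + real cy + lam * real (fsize F) \<le> e)"

lemma scripts_withinI:
  "aed_reach x (path_labels F vx) cx \<Longrightarrow> aed_reach y (path_labels F vy) cy \<Longrightarrow>
    real cx + real cy + lam * real (fsize F) \<le> e \<Longrightarrow> scripts_within lam x y F vx vy e"
  unfolding scripts_within_def by blast

lemma scripts_withinE:
  assumes "scripts_within lam x y F vx vy e"
  obtains cx cy where "aed_reach x (path_labels F vx) cx" "aed_reach y (path_labels F vy) cy"
    "real cx + real cy + lam * real (fsize F) \<le> e"
  using assms unfolding scripts_within_def by blast

lemma scripts_within_swap:
  "scripts_within lam x y F vx vy e \<longleftrightarrow> scripts_within lam y x F vy vx e"
  unfolding scripts_within_def by (metis add.commute)

lemma error_le_if_scripts_within:
  assumes "scripts_within lam x y F vx vy e"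
  shows "length x \<le> length (path_labels F vx) \<and> length y \<le> length (path_labels F vy)
    \<and> error lam x y F vx vy \<le> e"
proof -
  obtain cx cy where x: "aed_reach x (path_labels F vx) cx" and y: "aed_reach y (path_labels F vy) cy"
    and e: "real cx + real cy + lam * real (fsize F) \<le> e"
    using assms by (rule scripts_withinE)
  have "real (AED x (path_labels F vx)) \<le> cx" "real (AED y (path_labels F vy)) \<le> cy"
    using AED_le[OF x] AED_le[OF y] by simp_all
  with e show ?thesis
    using aed_reach_length_le[OF x] aed_reach_length_le[OF y] unfolding error_def by linarith
qed

lemma scripts_within_Nil: "scripts_within lam [] [] [] [] [] 0"
  by (rule scripts_withinI[where cx = 0 and cy = 0]) (simp_all add: aed_reach.refl)

lemma scripts_within_subst:
  assumes "scripts_within lam xs ys F px py e"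
  shows "scripts_within lam (a # xs) (b # ys) [LNode a F] (0 # px) (0 # py) (e + lam + ED a b)"
proof -
  obtain cx cy where x: "aed_reach xs (path_labels F px) cx"
    and y: "aed_reach ys (path_labels F py) cy"
    and e: "real cx + real cy + lam * real (fsize F) \<le> e"
    using assms by (rule scripts_withinE)
  show ?thesis
  proof (rule scripts_withinI)
    show "aed_reach (a # xs) (path_labels [LNode a F] (0 # px)) cx"
      using aed_reach_Cons[OF x] by simp
    show "aed_reach (b # ys) (path_labels [LNode a F] (0 # py)) (cy + ED a b)"
      using aed_reach_subst_Cons[OF y, of b a] by (simp add: ED_sym[of b a])
    show "real cx + real (cy + ED a b) + lam * real (fsize [LNode a F]) \<le> e + lam + ED a b"
      using e by (simp add: algebra_simps)
  qed
qed

lemma scripts_within_insert: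
  assumes "scripts_within lam x ys F px py e"
  shows "scripts_within lam x (b # ys) [LNode b F] (0 # px) (0 # py) (e + lam + ED [] b)"
proof -
  obtain cx cy where "aed_reach x (path_labels F px) cx" "aed_reach ys (path_labels F py) cy"
    and "real cx + real cy + lam * real (fsize F) \<le> e"
    using assms by (rule scripts_withinE)
  then show ?thesis
    by (intro scripts_withinI[where cx = "cx + length b" and cy = cy])
      (simp_all add: aed_reach_Cons aed_reach_insert_Cons algebra_simps)
qed

lemma scripts_within_insert_Nil:
  assumes "scripts_within lam [] ys F px py e"
  shows "scripts_within lam [] (b # ys) [LNode b F] [] (0 # py) (e + lam)"
proof -
  obtain cx cy where "aed_reach ys (path_labels F py) cy"
    and "real cx + real cy + lam * real (fsize F) \<le> e"
    using assms by (rule scripts_withinE)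
  then show ?thesis
    by (intro scripts_withinI[where cx = 0 and cy = cy])
      (auto simp: aed_reach.refl aed_reach_Cons algebra_simps)
qed

lemma scripts_within_delete:
  "scripts_within lam xs y F px py e \<Longrightarrow>
    scripts_within lam (a # xs) y [LNode a F] (0 # px) (0 # py) (e + lam + ED a [])"
  using scripts_within_insert[of lam y xs F py px e a] by (simp add: scripts_within_swap)

lemma scripts_within_delete_Nil:
  "scripts_within lam xs [] F px py e \<Longrightarrow>
    scripts_within lam (a # xs) [] [LNode a F] (0 # px) [] (e + lam)"
  using scripts_within_insert_Nil[of lam xs F py px e a] by (simp add: scripts_within_swap)

lemma scripts_within_giveup:
  "scripts_within lam (a # xs) (b # ys) [LNode a (chain xs), LNode b (chain ys)]
    (replicate (length (a # xs)) 0) (1 # replicate (length ys) 0)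
    (lam * real (length (a # xs)) + lam * real (length (b # ys)))"
  by (rule scripts_withinI[where cx = 0 and cy = 0])
    (simp_all add: aed_reach.refl path_labels_chain fsize_chain algebra_simps)

lemma build_bif_scripts_within:
  "build_bif x y lam (F, vx, vy) \<Longrightarrow> scripts_within lam x y F vx vy (EDG x y lam)"
proof (induction x y lam "(F, vx, vy)" arbitrary: F vx vy rule: build_bif.induct)
  case (empty lam)
  show ?case using scripts_within_Nil by simp
next
  case (insert x ys lam F px py b)
  have IH: "scripts_within lam x ys F px py (EDG x ys lam)" by fact
  show ?case
  proof (cases "x = []")
    case True
    then show ?thesis
      using scripts_within_insert_Nil[OF IH[unfolded True], of b]
      by (simp add: EDG_Nil_left algebra_simps)
  next
    case False
    with insert have "EDG x (b # ys) lam = EDG x ys lam + lam + real (ED [] b)" by simp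
    then show ?thesis using scripts_within_insert[OF IH, of b] False by simp
  qed
next
  case (delete xs y lam F px py a)
  have IH: "scripts_within lam xs y F px py (EDG xs y lam)" by fact
  show ?case
  proof (cases "y = []")
    case True
    then show ?thesis
      using scripts_within_delete_Nil[OF IH[unfolded True], of a]
      by (simp add: EDG_Nil_right algebra_simps)
  next
    case False
    with delete have "EDG (a # xs) y lam = EDG xs y lam + lam + real (ED a [])" by simp
    then show ?thesis using scripts_within_delete[OF IH, of a] False by simp
  qed
next
  case (substitute xs ys lam F px py a b)
  have IH: "scripts_within lam xs ys F px py (EDG xs ys lam)" by fact
  have "EDG (a # xs) (b # ys) lam = EDG xs ys lam + lam + real (ED a b)" by fact
  then show ?case using scripts_within_subst[OF IH] by (simp only:)
next
  case (giveup a xs b ys lam)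
  have "EDG (a # xs) (b # ys) lam = lam * real (length (a # xs)) + lam * real (length (b # ys))"
    by fact
  then show ?case using scripts_within_giveup by (simp only: chain.simps list.sel)
qed

theorem lemma9:
  fixes x y :: "'a list list" and lam :: real
    and F :: "'a ltree list" and vx vy :: "nat list"
  assumes "lam \<ge> 0"
    and "build_bif x y lam (F, vx, vy)"
  shows "length x \<le> length (path_labels F vx)
       \<and> length y \<le> length (path_labels F vy)
       \<and> error lam x y F vx vy \<le> EDG x y lam"
  using error_le_if_scripts_within[OF build_bif_scripts_within[OF assms(2)]] .

end
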